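(* Let $p,p'\ge1$ be integers with $|p-p'|=1$ and $\alpha=\alpha_{(p,p')}$. If $X$ is a palindrome that is a factor of a Sturmian word, then $b\,\alpha(X)$ is a palindrome. Conversely, if $X$ is a palindrome such that $Xb$ is block-complete, then $\alpha^{-1}(Xb)$ is a palindrome.
   Context: $\alpha_{(p,p')}$ is the morphism on $\{a,b\}^*$ with $a\mapsto a^pb$, $b\mapsto a^{p'}b$. A Sturmian word is a right-infinite aperiodic word over $\{a,b\}$ with exactly $n+1$ factors of each length $n$. A palindrome is a word equal to its reverse. A word is block-complete (for $\alpha$) if it is a concatenation of the blocks $a^pb$ and $a^{p'}b$, i.e. equals $\alpha(Z)$ for some word $Z$; for such a word $W$, $\alpha^{-1}(W)$ denotes the unique $Z$ with $\alpha(Z)=W$. *)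

theory Defs
  imports Main
begin

datatype letter = A | B

definition alpha :: "nat \<Rightarrow> nat \<Rightarrow> letter list \<Rightarrow> letter list" where
  "alpha p p' Z = concat (map (\<lambda>c. case c of A \<Rightarrow> replicate p A @ [B] | B \<Rightarrow> replicate p' A @ [B]) Z)"

definition palindrome :: "'a list \<Rightarrow> bool" where
  "palindrome w \<longleftrightarrow> rev w = w"

definition factors_of_len :: "(nat \<Rightarrow> 'a) \<Rightarrow> nat \<Rightarrow> 'a list set" where
  "factors_of_len s n = {map s [i..<i+n] | i. True}"

definition is_factor :: "'a list \<Rightarrow> (nat \<Rightarrow> 'a) \<Rightarrow> bool" where
  "is_factor w s \<longleftrightarrow> (\<exists>i. w = map s [i..<i + length w])"

definition eventually_periodic :: "(nat \<Rightarrow> 'a) \<Rightarrow> bool" where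
  "eventually_periodic s \<longleftrightarrow> (\<exists>N q. q > 0 \<and> (\<forall>i\<ge>N. s (i + q) = s i))"

definition sturmian :: "(nat \<Rightarrow> letter) \<Rightarrow> bool" where
  "sturmian s \<longleftrightarrow> \<not> eventually_periodic s \<and> (\<forall>n. card (factors_of_len s n) = n + 1)"

definition block_complete :: "nat \<Rightarrow> nat \<Rightarrow> letter list \<Rightarrow> bool" where
  "block_complete p p' W \<longleftrightarrow> (\<exists>Z. alpha p p' Z = W)"

definition alpha_inv :: "nat \<Rightarrow> nat \<Rightarrow> letter list \<Rightarrow> letter list" where
  "alpha_inv p p' W = (THE Z. alpha p p' Z = W)"

end

theory Submission
  imports Defs
begin

text \<open>Each block \<open>a\<^sup>k b\<close> ends in \<open>b\<close>, so moving the final \<open>b\<close> of \<open>b \<alpha>(X)\<close> to the front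
  cuts it into the blocks \<open>b a\<^sup>k\<close>, which are the reversed blocks. Hence reversal commutes
  with \<open>W \<mapsto> b \<alpha>(W)\<close>, which gives the first claim for every palindrome \<open>X\<close>. For the second,
  \<open>\<alpha>\<close> is injective because the blocks \<open>a\<^sup>p b\<close> and \<open>a\<^sup>p\<^sup>' b\<close> differ and form a prefix code;
  if \<open>\<alpha>(Z) = X b\<close> with \<open>X\<close> a palindrome, then \<open>b \<alpha>(rev Z) = rev (X b) b = b X b = b \<alpha>(Z)\<close>,
  so \<open>rev Z = Z\<close>.\<close>

definition block_exponent :: "nat \<Rightarrow> nat \<Rightarrow> letter \<Rightarrow> nat" where
  "block_exponent p p' c = (case c of A \<Rightarrow> p | B \<Rightarrow> p')"

lemma alpha_Nil [simp]: "alpha p p' [] = []"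
  by (simp add: alpha_def)

lemma alpha_Cons [simp]:
  "alpha p p' (c # W) = replicate (block_exponent p p' c) A @ B # alpha p p' W"
  by (simp add: alpha_def block_exponent_def split: letter.split)

lemma Cons_B_alpha:
  "B # alpha p p' W = concat (map (\<lambda>c. B # replicate (block_exponent p p' c) A) W) @ [B]"
  by (induction W) auto

lemma rev_alpha:
  "rev (alpha p p' W) = concat (map (\<lambda>c. B # replicate (block_exponent p p' c) A) (rev W))"
  by (induction W) auto

lemma rev_Cons_B_alpha: "rev (B # alpha p p' W) = B # alpha p p' (rev W)"
  using Cons_B_alpha[of p p' "rev W"] by (simp add: rev_alpha)

lemma replicate_A_append_B_eq_iff:
  "replicate n A @ B # xs = replicate m A @ B # ys \<longleftrightarrow> n = m \<and> xs = ys"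
proof (induction n arbitrary: m)
  case 0 then show ?case by (cases m) auto
next
  case (Suc n) then show ?case by (cases m) auto
qed

lemma block_exponent_inj: "p \<noteq> p' \<Longrightarrow> inj (block_exponent p p')"
  by (auto intro!: injI simp: block_exponent_def split: letter.splits)

lemma inj_alpha:
  assumes "p \<noteq> p'"
  shows "inj (alpha p p')"
proof (rule injI)
  fix U V show "alpha p p' U = alpha p p' V \<Longrightarrow> U = V"
  proof (induction U arbitrary: V)
    case Nil then show ?case by (cases V) auto
  next
    case (Cons u U)
    then obtain v V' where "V = v # V'" by (cases V) auto
    with Cons show ?case
      using block_exponent_inj[OF assms] by (auto simp: replicate_A_append_B_eq_iff dest: injD)
  qed
qed

lemma alpha_inv_alpha: "p \<noteq> p' \<Longrightarrow> alpha_inv p p' (alpha p p' Z) = Z"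
  unfolding alpha_inv_def by (rule the_equality) (auto dest: inj_alpha injD)

theorem lemma1:
  fixes p p' :: nat
  assumes "p \<ge> 1" and "p' \<ge> 1" and "p = p' + 1 \<or> p' = p + 1"
  shows "(\<forall>X s. sturmian s \<and> is_factor X s \<and> palindrome X
            \<longrightarrow> palindrome (B # alpha p p' X))
       \<and> (\<forall>X. palindrome X \<and> block_complete p p' (X @ [B])
            \<longrightarrow> palindrome (alpha_inv p p' (X @ [B])))"
proof (intro conjI allI impI)
  fix X s assume "sturmian s \<and> is_factor X s \<and> palindrome X"
  then show "palindrome (B # alpha p p' X)"
    by (metis palindrome_def rev_Cons_B_alpha)
next
  fix X assume X: "palindrome X \<and> block_complete p p' (X @ [B])"
  then obtain Z where Z: "alpha p p' Z = X @ [B]"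
    by (auto simp: block_complete_def)
  have "p \<noteq> p'" using assms(3) by auto
  have "B # alpha p p' (rev Z) = rev (B # alpha p p' Z)"
    by (rule rev_Cons_B_alpha[symmetric])
  also have "\<dots> = B # alpha p p' Z"
    using X Z by (simp add: palindrome_def)
  finally have "rev Z = Z"
    using inj_alpha[OF \<open>p \<noteq> p'\<close>] by (simp add: inj_eq)
  then show "palindrome (alpha_inv p p' (X @ [B]))"
    using Z alpha_inv_alpha[OF \<open>p \<noteq> p'\<close>] by (metis palindrome_def)
qed

end
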